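(* If $r_{\min}<1$ and $\eta>\max\{\frac{r_{\min}}2,\frac{r_{\max}}n\}$, then the set $E_1=\{(x_1,\dots,x_n)\in[0,1]^n:\max_{i,j\in\mathcal V}|x_i-x_j|\ge1\}$ is finite-time robustly reachable from $[0,1]^n$ under control protocol (C1).
   Context: Fix $n\ge3$, $\mathcal V=\{1,\dots,n\}$, confidence thresholds $r_i\in(0,1]$, $r_{\min}=\min_ir_i$, $r_{\max}=\max_ir_i$, $\eta>0$. States $x(t)\in[0,1]^n$. Neighbor set $\mathcal N_i(t)=\{j:|x_j(t)-x_i(t)|\le r_i\}$ (contains $i$), $\Pi_{[0,1]}(y)=\min\{1,\max\{0,y\}\}$. Control protocol (C1): $x_i(t+1)=\Pi_{[0,1]}\big(|\mathcal N_i(t)|^{-1}\sum_{j\in\mathcal N_i(t)}x_j(t)+u_i(t)+b_i(t)\big)$, where $\delta_i(t)\in(0,\eta)$ is a chosen parameter, $u_i(t)\in[-\eta+\delta_i(t),\eta-\delta_i(t)]$ a chosen control input, $b_i(t)\in[-\delta_i(t),\delta_i(t)]$ an arbitrary uncertainty; $\delta_i(t),u_i(t)$ may depend on $x(0),\dots,x(t)$. A set $S\subseteq[0,1]^n$ is finite-time robustly reachable from $[0,1]^n$ under the protocol if there exist constants $T>0$ and $\varepsilon\in(0,\eta)$, independent of $x(0)$, such that for every $x(0)\in[0,1]^n$, either $x(0)\in S$, or one can choose $\delta_i(t)\in[\varepsilon,\eta)$ and $u_i(t)\in[-\eta+\delta_i(t),\eta-\delta_i(t)]$ for $i\in\mathcal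 V$, $0\le t<T$, guaranteeing that for arbitrary $b_i(t)\in[-\delta_i(t),\delta_i(t)]$ there is $t\in[1,T]$ with $x(t)\in S$. *)

theory Defs
  imports Complex_Main
begin

text \<open>Agents are indexed by V = {1..n}; a state is a function nat \<Rightarrow> real
  (only the values on {1..n} matter).\<close>

definition clip01 :: "real \<Rightarrow> real" where
  "clip01 y = min 1 (max 0 y)"

definition nbr :: "nat \<Rightarrow> (nat \<Rightarrow> real) \<Rightarrow> (nat \<Rightarrow> real) \<Rightarrow> nat \<Rightarrow> nat set" where
  "nbr n r x i = {j \<in> {1..n}. \<bar>x j - x i\<bar> \<le> r i}"

definition avg_nbr :: "nat \<Rightarrow> (nat \<Rightarrow> real) \<Rightarrow> (nat \<Rightarrow> real) \<Rightarrow> nat \<Rightarrow> real" where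
  "avg_nbr n r x i = (\<Sum>j\<in>nbr n r x i. x j) / real (card (nbr n r x i))"

text \<open>A controller strategy maps the history [x(0),...,x(t)] to the pair
  (delta(t), u(t)).  The uncertainty is b :: nat \<Rightarrow> nat \<Rightarrow> real, b t i = b_i(t).
  hist t is the list [x(0),...,x(t)] of the closed-loop trajectory under (C1).\<close>

fun hist :: "nat \<Rightarrow> (nat \<Rightarrow> real) \<Rightarrow>
    ((nat \<Rightarrow> real) list \<Rightarrow> (nat \<Rightarrow> real) \<times> (nat \<Rightarrow> real)) \<Rightarrow>
    (nat \<Rightarrow> nat \<Rightarrow> real) \<Rightarrow> (nat \<Rightarrow> real) \<Rightarrow> nat \<Rightarrow> (nat \<Rightarrow> real) list" where
  "hist n r \<sigma> b x0 0 = [x0]"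
| "hist n r \<sigma> b x0 (Suc t) =
     (let h = hist n r \<sigma> b x0 t; x = last h; u = snd (\<sigma> h) in
      h @ [(\<lambda>i. clip01 (avg_nbr n r x i + u i + b t i))])"

definition state :: "nat \<Rightarrow> (nat \<Rightarrow> real) \<Rightarrow>
    ((nat \<Rightarrow> real) list \<Rightarrow> (nat \<Rightarrow> real) \<times> (nat \<Rightarrow> real)) \<Rightarrow>
    (nat \<Rightarrow> nat \<Rightarrow> real) \<Rightarrow> (nat \<Rightarrow> real) \<Rightarrow> nat \<Rightarrow> (nat \<Rightarrow> real)" where
  "state n r \<sigma> b x0 t = last (hist n r \<sigma> b x0 t)"

definition in_cube :: "nat \<Rightarrow> (nat \<Rightarrow> real) \<Rightarrow> bool" where
  "in_cube n x \<longleftrightarrow> (\<forall>i\<in>{1..n}. 0 \<le> x i \<and> x i \<le> 1)"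

text \<open>The strategy must respect the constraints delta_i \<in> [eps, eta),
  u_i \<in> [-eta+delta_i, eta-delta_i] on every history (values on histories that
  are never realised are irrelevant, so this is no restriction).\<close>

definition robustly_reachable ::
  "nat \<Rightarrow> (nat \<Rightarrow> real) \<Rightarrow> real \<Rightarrow> (nat \<Rightarrow> real) set \<Rightarrow> bool" where
  "robustly_reachable n r \<eta> S \<longleftrightarrow>
     (\<exists>T::nat. T > 0 \<and> (\<exists>\<epsilon>::real. 0 < \<epsilon> \<and> \<epsilon> < \<eta> \<and>
       (\<forall>x0. in_cube n x0 \<longrightarrow> x0 \<in> S \<or>
         (\<exists>\<sigma>. (\<forall>h i. i \<in> {1..n} \<longrightarrow>
                    \<epsilon> \<le> fst (\<sigma> h) i \<and> fst (\<sigma> h) i < \<eta> \<and>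
                    \<bar>snd (\<sigma> h) i\<bar> \<le> \<eta> - fst (\<sigma> h) i) \<and>
               (\<forall>b. (\<forall>t<T. \<forall>i\<in>{1..n}.
                        \<bar>b t i\<bar> \<le> fst (\<sigma> (hist n r \<sigma> b x0 t)) i) \<longrightarrow>
                    (\<exists>t\<in>{1..T}. state n r \<sigma> b x0 t \<in> S))))))"

definition E1 :: "nat \<Rightarrow> (nat \<Rightarrow> real) set" where
  "E1 n = {x. in_cube n x \<and> (\<exists>i\<in>{1..n}. \<exists>j\<in>{1..n}. \<bar>x i - x j\<bar> \<ge> 1)}"

end

theory Submission
  imports Defs
begin

text \<open>Let \<open>k\<close> be an agent of minimal confidence threshold. First push everybody up, by an
  amount the uncertainty cannot cancel, until all opinions sit at 1; then lower everybody by
  \<open>r\<^sub>k/2\<close>. In the next step the others are pushed back to 1 while \<open>k\<close> is pushed down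
  by almost \<open>\<eta>\<close>, and since \<open>\<eta> > r\<^sub>k/2\<close> this leaves \<open>k\<close> farther than \<open>r\<^sub>k\<close> from
  everybody. From then on \<open>k\<close> only hears itself and descends to 0, while each other agent
  hears \<open>k\<close> with weight at most \<open>1/n\<close>, so a push larger than \<open>r\<^sub>m\<^sub>a\<^sub>x/n\<close> keeps it at 1.\<close>

lemma clip01_ge_0: "0 \<le> clip01 y"
  and clip01_le_1: "clip01 y \<le> 1"
  and min_1_le_clip01: "min 1 y \<le> clip01 y"
  and clip01_le_max_0: "clip01 y \<le> max 0 y"
  by (auto simp: clip01_def)

lemma pos_if_one_le_mult: "1 \<le> real K * \<gamma> \<Longrightarrow> 0 < \<gamma>"
  by (smt (verit) mult_nonneg_nonpos of_nat_0_le_iff)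

lemma one_le_ceiling_inverse_mult:
  fixes \<gamma> :: real
  assumes "0 < \<gamma>"
  shows "1 \<le> real (nat \<lceil>1 / \<gamma>\<rceil>) * \<gamma>"
proof -
  have "1 / \<gamma> \<le> real (nat \<lceil>1 / \<gamma>\<rceil>)"
    using le_of_int_ceiling[of "1 / \<gamma>"] by linarith
  then have "1 / \<gamma> * \<gamma> \<le> real (nat \<lceil>1 / \<gamma>\<rceil>) * \<gamma>"
    using assms by (intro mult_right_mono) auto
  then show ?thesis using assms by simp
qed

lemma nbr_subset: "nbr n r x i \<subseteq> {1..n}"
  by (auto simp: nbr_def)

lemma self_in_nbr: "i \<in> {1..n} \<Longrightarrow> 0 \<le> r i \<Longrightarrow> i \<in> nbr n r x i"
  by (simp add: nbr_def)

lemma card_nbr_pos: "i \<in> {1..n} \<Longrightarrow> 0 \<le> r i \<Longrightarrow> 0 < card (nbr n r x i)"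
  using self_in_nbr[of i n r x] finite_subset[OF nbr_subset]
  by (metis card_gt_0_iff emptyE finite_atLeastAtMost)

lemma avg_nbr_ge:
  assumes "i \<in> {1..n}" "0 \<le> r i" "\<And>j. j \<in> nbr n r x i \<Longrightarrow> c \<le> x j"
  shows "c \<le> avg_nbr n r x i"
proof -
  have "real (card (nbr n r x i)) * c \<le> (\<Sum>j\<in>nbr n r x i. x j)"
    using sum_mono[of "nbr n r x i" "\<lambda>_. c" x] assms(3) by simp
  then show ?thesis
    using card_nbr_pos[of i n r x] assms(1,2) by (simp add: avg_nbr_def field_simps)
qed

lemma avg_nbr_le:
  assumes "i \<in> {1..n}" "0 \<le> r i" "\<And>j. j \<in> nbr n r x i \<Longrightarrow> x j \<le> c"
  shows "avg_nbr n r x i \<le> c"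
proof -
  have "(\<Sum>j\<in>nbr n r x i. x j) \<le> real (card (nbr n r x i)) * c"
    using sum_mono[of "nbr n r x i" x "\<lambda>_. c"] assms(3) by simp
  then show ?thesis
    using card_nbr_pos[of i n r x] assms(1,2) by (simp add: avg_nbr_def field_simps)
qed

lemma avg_nbr_isolated:
  assumes "k \<in> {1..n}" "0 \<le> r k" "\<And>j. j \<in> {1..n} - {k} \<Longrightarrow> r k < \<bar>x j - x k\<bar>"
  shows "avg_nbr n r x k = x k"
proof -
  have "nbr n r x k = {k}"
    using assms unfolding nbr_def by force
  then show ?thesis by (simp add: avg_nbr_def)
qed

text \<open>If all agents but \<open>k\<close> agree on 1, another agent either ignores \<open>k\<close> or sees everybody,
  and in the latter case \<open>k\<close> lowers its average by \<open>(1 - x\<^sub>k)/n \<le> r\<^sub>j/n\<close>.\<close>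

lemma avg_nbr_one_outlier:
  assumes "k \<in> {1..n}" "j \<in> {1..n} - {k}" "0 \<le> r j"
    and others: "\<And>l. l \<in> {1..n} - {k} \<Longrightarrow> x l = 1" and "x k \<le> 1"
  shows "1 - r j / real n \<le> avg_nbr n r x j"
proof (cases "k \<in> nbr n r x j")
  case False
  then have "\<And>l. l \<in> nbr n r x j \<Longrightarrow> 1 - r j / real n \<le> x l"
    using nbr_subset others assms(3) by fastforce
  then show ?thesis
    using avg_nbr_ge assms(2,3) by blast
next
  case True
  have xj: "x j = 1" using others assms(2) .
  with True have close: "1 - x k \<le> r j" by (auto simp: nbr_def)
  have "nbr n r x j = {1..n}"
    using nbr_subset[of n r x j] others xj close assms(3,5) by (fastforce simp: nbr_def)
  moreover have "(\<Sum>l\<in>{1..n}. x l) = x k + (real n - 1)"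
  proof -
    have "(\<Sum>l\<in>{1..n}. x l) = x k + (\<Sum>l\<in>{1..n}-{k}. x l)"
      using assms(1) by (simp add: sum.remove)
    also have "(\<Sum>l\<in>{1..n}-{k}. x l) = (\<Sum>l\<in>{1..n}-{k}. 1)"
      using others by (intro sum.cong) auto
    finally show ?thesis using assms(1) by simp
  qed
  moreover have "0 < real n" using assms(1) by simp
  ultimately have "avg_nbr n r x j = 1 - (1 - x k) / real n"
    by (simp add: avg_nbr_def field_simps)
  also have "1 - r j / real n \<le> \<dots>"
    using close \<open>0 < real n\<close> by (simp add: divide_right_mono)
  finally show ?thesis .
qed

text \<open>\<open>v t i\<close> is the total input \<open>u\<^sub>i(t) + b\<^sub>i(t)\<close>.\<close>

locale hk_trajectory =
  fixes n :: nat and r :: "nat \<Rightarrow> real" and x v :: "nat \<Rightarrow> nat \<Rightarrow> real"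
  assumes r_nonneg: "\<And>i. i \<in> {1..n} \<Longrightarrow> 0 \<le> r i"
    and x_Suc: "\<And>t i. x (Suc t) i = clip01 (avg_nbr n r (x t) i + v t i)"
begin

lemma x_Suc_ge_0: "0 \<le> x (Suc t) i"
  and x_Suc_le_1: "x (Suc t) i \<le> 1"
  by (simp_all add: x_Suc clip01_ge_0 clip01_le_1)

lemma in_cube_x_Suc: "in_cube n (x (Suc t))"
  by (simp add: in_cube_def x_Suc_ge_0 x_Suc_le_1)

lemma x_Suc_ge:
  assumes "\<forall>j\<in>{1..n}. c \<le> x t j" "i \<in> {1..n}"
  shows "min 1 (c + v t i) \<le> x (Suc t) i"
proof -
  have "c \<le> avg_nbr n r (x t) i"
    using avg_nbr_ge[of i n r "x t" c] r_nonneg nbr_subset assms by blast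
  then have "min 1 (c + v t i) \<le> min 1 (avg_nbr n r (x t) i + v t i)"
    by simp
  then show ?thesis
    unfolding x_Suc by (rule order_trans[OF _ min_1_le_clip01])
qed

lemma x_Suc_le:
  assumes "\<forall>j\<in>{1..n}. x t j \<le> c" "i \<in> {1..n}"
  shows "x (Suc t) i \<le> max 0 (c + v t i)"
proof -
  have "avg_nbr n r (x t) i \<le> c"
    using avg_nbr_le[of i n r "x t" c] r_nonneg nbr_subset assms by blast
  then have "max 0 (avg_nbr n r (x t) i + v t i) \<le> max 0 (c + v t i)"
    by simp
  then show ?thesis
    unfolding x_Suc by (rule order_trans[OF clip01_le_max_0])
qed

lemma x_eq_1_if_ge_1: "1 \<le> x (Suc t) i \<Longrightarrow> x (Suc t) i = 1"
  using x_Suc_le_1 by (simp add: order_antisym)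

lemma rise_to_1:
  assumes "in_cube n (x 0)" "1 \<le> real K * \<gamma>"
    and push: "\<forall>t<K. \<forall>i\<in>{1..n}. \<gamma> \<le> v t i"
  shows "\<forall>i\<in>{1..n}. x K i = 1"
proof -
  have "\<gamma> > 0"
    using assms(2) by (rule pos_if_one_le_mult)
  have rising: "\<forall>i\<in>{1..n}. min 1 (real t * \<gamma>) \<le> x t i" if "t \<le> K" for t
    using that
  proof (induction t)
    case 0
    then show ?case using assms(1) by (simp add: in_cube_def)
  next
    case (Suc t)
    have IH: "\<forall>j\<in>{1..n}. min 1 (real t * \<gamma>) \<le> x t j"
      using Suc by simp
    show ?case
    proof
      fix i assume i: "i \<in> {1..n}"
      have "\<gamma> \<le> v t i" using push Suc.prems i by simp
      then have "min 1 (real (Suc t) * \<gamma>) \<le> min 1 (min 1 (real t * \<gamma>) + v t i)"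
        using \<open>\<gamma> > 0\<close> by (simp add: min_def algebra_simps)
      also have "\<dots> \<le> x (Suc t) i"
        using x_Suc_ge[OF IH i] .
      finally show "min 1 (real (Suc t) * \<gamma>) \<le> x (Suc t) i" .
    qed
  qed
  have "\<forall>i\<in>{1..n}. 1 \<le> x K i"
    using rising[OF order_refl] assms(2) by (simp add: min_def)
  moreover obtain K' where "K = Suc K'"
    using assms(2) by (cases K) auto
  ultimately show ?thesis
    using x_eq_1_if_ge_1[of K'] by simp
qed

lemma isolated_step:
  assumes k: "k \<in> {1..n}" and others: "\<forall>j\<in>{1..n}-{k}. x t j = 1"
    and far: "x t k < 1 - r k"
  shows "x (Suc t) k \<le> max 0 (x t k + v t k)"
    and "\<And>j. j \<in> {1..n}-{k} \<Longrightarrow> r j / real n \<le> v t j \<Longrightarrow> x (Suc t) j = 1"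
proof -
  have "r k < \<bar>x t j - x t k\<bar>" if "j \<in> {1..n}-{k}" for j
    using others that far by simp
  then have "avg_nbr n r (x t) k = x t k"
    using avg_nbr_isolated[of k n r "x t"] k r_nonneg[OF k] by simp
  then show "x (Suc t) k \<le> max 0 (x t k + v t k)"
    by (simp add: x_Suc clip01_le_max_0)
next
  fix j assume j: "j \<in> {1..n}-{k}" and push: "r j / real n \<le> v t j"
  have "x t k \<le> 1" using far r_nonneg[OF k] by simp
  then have "1 - r j / real n \<le> avg_nbr n r (x t) j"
    using avg_nbr_one_outlier[of k n j r "x t"] k j r_nonneg[of j] others by simp
  with push have "1 \<le> min 1 (avg_nbr n r (x t) j + v t j)" by simp
  then have "1 \<le> x (Suc t) j"
    unfolding x_Suc by (rule order_trans[OF _ min_1_le_clip01])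
  then show "x (Suc t) j = 1" by (rule x_eq_1_if_ge_1)
qed

lemma isolation_phase:
  assumes k: "k \<in> {1..n}"
    and start: "\<forall>j\<in>{1..n}-{k}. x t0 j = 1" "x t0 k \<le> max 0 B"
    and gap: "max 0 B < 1 - r k" and "0 \<le> \<gamma>"
    and drop: "\<forall>s<S. v (t0 + s) k \<le> -\<gamma>"
    and hold: "\<forall>s<S. \<forall>j\<in>{1..n}-{k}. r j / real n \<le> v (t0 + s) j"
  shows "s \<le> S \<Longrightarrow>
    (\<forall>j\<in>{1..n}-{k}. x (t0 + s) j = 1) \<and> x (t0 + s) k \<le> max 0 (B - real s * \<gamma>)"
proof (induction s)
  case 0
  then show ?case using start by simp
next
  case (Suc s)
  then have others: "\<forall>j\<in>{1..n}-{k}. x (t0 + s) j = 1"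
    and below: "x (t0 + s) k \<le> max 0 (B - real s * \<gamma>)"
    by simp_all
  have "0 \<le> real s * \<gamma>" using \<open>0 \<le> \<gamma>\<close> by simp
  then have far: "x (t0 + s) k < 1 - r k"
    using below gap by (auto simp: le_max_iff_disj)
  have "s < S" using Suc.prems by simp
  have "\<forall>j\<in>{1..n}-{k}. x (Suc (t0 + s)) j = 1"
    using isolated_step(2)[OF k others far] hold \<open>s < S\<close> by blast
  moreover have "v (t0 + s) k \<le> -\<gamma>" using drop \<open>s < S\<close> by blast
  then have "x (Suc (t0 + s)) k \<le> max 0 (B - real (Suc s) * \<gamma>)"
    using isolated_step(1)[OF k others far] below \<open>0 \<le> \<gamma>\<close>
    by (simp add: max_def algebra_simps split: if_splits)
  ultimately show ?case by simp
qed

lemma shift_from_consensus: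
  assumes "\<forall>i\<in>{1..n}. x t i = 1" "\<forall>i\<in>{1..n}. \<bar>v t i + \<rho>\<bar> \<le> \<epsilon>"
    and "0 \<le> \<epsilon>" "0 \<le> \<rho>" "\<rho> \<le> 1"
  shows "\<forall>i\<in>{1..n}. \<bar>x (Suc t) i - (1 - \<rho>)\<bar> \<le> \<epsilon>"
proof
  fix i assume i: "i \<in> {1..n}"
  have "\<forall>j\<in>{1..n}. 1 \<le> x t j" "\<forall>j\<in>{1..n}. x t j \<le> 1"
    using assms(1) by simp_all
  then have "min 1 (1 + v t i) \<le> x (Suc t) i" "x (Suc t) i \<le> max 0 (1 + v t i)"
    using x_Suc_ge x_Suc_le i by blast+
  moreover have "\<bar>v t i + \<rho>\<bar> \<le> \<epsilon>" using assms(2) i by blast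
  ultimately show "\<bar>x (Suc t) i - (1 - \<rho>)\<bar> \<le> \<epsilon>"
    using assms(3-5) by (simp add: abs_le_iff min_def max_def split: if_splits)
qed

lemma separation_step:
  assumes k: "k \<in> {1..n}" and band: "\<forall>i\<in>{1..n}. \<bar>x t i - a\<bar> \<le> \<epsilon>"
    and up: "\<forall>j\<in>{1..n}-{k}. 1 - a + \<epsilon> \<le> v t j" and down: "v t k \<le> -\<gamma>"
  shows "\<forall>j\<in>{1..n}-{k}. x (Suc t) j = 1" and "x (Suc t) k \<le> max 0 (a + \<epsilon> - \<gamma>)"
proof -
  have lo: "\<forall>i\<in>{1..n}. a - \<epsilon> \<le> x t i" and hi: "\<forall>i\<in>{1..n}. x t i \<le> a + \<epsilon>"
    using band by (auto simp: abs_le_iff)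
  show "\<forall>j\<in>{1..n}-{k}. x (Suc t) j = 1"
  proof
    fix j assume j: "j \<in> {1..n}-{k}"
    have "1 \<le> min 1 (a - \<epsilon> + v t j)" using up[rule_format, OF j] by simp
    also have "\<dots> \<le> x (Suc t) j" using x_Suc_ge[OF lo] j by simp
    finally show "x (Suc t) j = 1" by (rule x_eq_1_if_ge_1)
  qed
  have "x (Suc t) k \<le> max 0 (a + \<epsilon> + v t k)" using x_Suc_le[OF hi k] .
  then show "x (Suc t) k \<le> max 0 (a + \<epsilon> - \<gamma>)"
    using down by (simp add: max_def split: if_splits)
qed

lemma isolation_reaches_E1:
  assumes "2 \<le> n" "in_cube n (x 0)" and k: "k \<in> {1..n}" "r k < 1"
    and K: "1 \<le> real K * \<gamma>" and "0 \<le> \<epsilon>" "0 \<le> \<rho>" "\<rho> \<le> 1"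
    and sep: "r k + \<epsilon> < \<rho> + \<gamma>" and "\<rho> + \<epsilon> \<le> \<gamma>"
    and r_le: "\<forall>j\<in>{1..n}. r j / real n \<le> \<gamma>"
    and rise: "\<forall>t<K. \<forall>i\<in>{1..n}. \<gamma> \<le> v t i"
    and shift: "\<forall>i\<in>{1..n}. \<bar>v K i + \<rho>\<bar> \<le> \<epsilon>"
    and drop: "\<forall>s\<le>K. v (Suc K + s) k \<le> -\<gamma>"
    and hold: "\<forall>s\<le>K. \<forall>j\<in>{1..n}-{k}. \<gamma> \<le> v (Suc K + s) j"
  shows "x (2 * K + 2) \<in> E1 n"
proof -
  define B where "B = 1 - \<rho> + \<epsilon> - \<gamma>"
  have "\<forall>i\<in>{1..n}. \<bar>x (Suc K) i - (1 - \<rho>)\<bar> \<le> \<epsilon>"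
    using shift_from_consensus rise_to_1 assms(2,6-8) K rise shift by blast
  moreover have "\<forall>j\<in>{1..n}-{k}. 1 - (1 - \<rho>) + \<epsilon> \<le> v (Suc K) j"
    using hold[rule_format, of 0] \<open>\<rho> + \<epsilon> \<le> \<gamma>\<close> by fastforce
  ultimately have split: "\<forall>j\<in>{1..n}-{k}. x (Suc (Suc K)) j = 1" "x (Suc (Suc K)) k \<le> max 0 B"
    using separation_step[OF k(1)] drop[rule_format, of 0] unfolding B_def by auto
  have gap: "max 0 B < 1 - r k" using sep k(2) by (simp add: B_def)
  have drop': "\<forall>s<K. v (Suc (Suc K) + s) k \<le> -\<gamma>"
    using drop by (metis Suc_leI add_Suc_shift)
  have hold': "\<forall>s<K. \<forall>j\<in>{1..n}-{k}. r j / real n \<le> v (Suc (Suc K) + s) j"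
    using hold r_le by (metis DiffD1 Suc_leI add_Suc_shift order_trans)
  have "0 < \<gamma>" using K by (rule pos_if_one_le_mult)
  then have "(\<forall>j\<in>{1..n}-{k}. x (Suc (Suc K) + K) j = 1)
      \<and> x (Suc (Suc K) + K) k \<le> max 0 (B - real K * \<gamma>)"
    using isolation_phase[OF k(1) split gap _ drop' hold' order_refl] by simp
  moreover have "2 * K + 2 = Suc (Suc K) + K" by simp
  moreover have "B - real K * \<gamma> \<le> 0"
    using K sep r_nonneg[OF k(1)] by (simp add: B_def)
  ultimately have "\<forall>j\<in>{1..n}-{k}. x (2 * K + 2) j = 1" "x (2 * K + 2) k = 0"
    using x_Suc_ge_0[of "Suc K + K" k] by (simp_all add: order_antisym mult_2)
  moreover obtain j where "j \<in> {1..n}-{k}"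
    using assms(1) k(1) by (cases "k = 1") (auto intro: that[of 1] that[of 2])
  moreover have "in_cube n (x (2 * K + 2))"
    using in_cube_x_Suc[of "Suc (2 * K)"] by simp
  ultimately show ?thesis
    using k(1) unfolding E1_def by force
qed

end

text \<open>A controller that ignores the observed opinions: a history of length \<open>t + 1\<close> ends at
  time \<open>t\<close>.\<close>

definition open_loop ::
  "(nat \<Rightarrow> real) \<Rightarrow> (nat \<Rightarrow> nat \<Rightarrow> real) \<Rightarrow> (nat \<Rightarrow> real) list \<Rightarrow> (nat \<Rightarrow> real) \<times> (nat \<Rightarrow> real)"
  where "open_loop \<delta> u h = (\<delta>, u (length h - 1))"

lemma length_hist: "length (hist n r \<sigma> b x0 t) = Suc t"
  by (induction t) (simp_all add: Let_def)

lemma state_0: "state n r \<sigma> b x0 0 = x0"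
  by (simp add: state_def)

lemma state_open_loop_Suc:
  "state n r (open_loop \<delta> u) b x0 (Suc t) i
     = clip01 (avg_nbr n r (state n r (open_loop \<delta> u) b x0 t) i + (u t i + b t i))"
  by (simp add: state_def open_loop_def Let_def length_hist add.assoc)

lemma hk_trajectory_open_loop:
  "\<forall>i\<in>{1..n}. 0 \<le> r i
    \<Longrightarrow> hk_trajectory n r (state n r (open_loop \<delta> u) b x0) (\<lambda>t i. u t i + b t i)"
  by unfold_locales (simp_all add: state_open_loop_Suc)

lemma robustly_reachable_open_loop:
  assumes "0 < T" "0 < \<epsilon>" "\<epsilon> < \<eta>"
    and admissible: "\<And>t i. i \<in> {1..n} \<Longrightarrow> \<bar>u t i\<bar> \<le> \<eta> - \<epsilon>"
    and reach: "\<And>x0 b. in_cube n x0 \<Longrightarrow> \<forall>t<T. \<forall>i\<in>{1..n}. \<bar>b t i\<bar> \<le> \<epsilon>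
      \<Longrightarrow> \<exists>t\<in>{1..T}. state n r (open_loop (\<lambda>_. \<epsilon>) u) b x0 t \<in> S"
  shows "robustly_reachable n r \<eta> S"
  unfolding robustly_reachable_def
proof (intro exI[of _ T] exI[of _ \<epsilon>] conjI allI impI disjI2)
  fix x0 assume "in_cube n x0"
  then show "\<exists>\<sigma>. (\<forall>h i. i \<in> {1..n} \<longrightarrow> \<epsilon> \<le> fst (\<sigma> h) i \<and> fst (\<sigma> h) i < \<eta>
                 \<and> \<bar>snd (\<sigma> h) i\<bar> \<le> \<eta> - fst (\<sigma> h) i)
           \<and> (\<forall>b. (\<forall>t<T. \<forall>i\<in>{1..n}. \<bar>b t i\<bar> \<le> fst (\<sigma> (hist n r \<sigma> b x0 t)) i)
                \<longrightarrow> (\<exists>t\<in>{1..T}. state n r \<sigma> b x0 t \<in> S))"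
    using assms by (intro exI[of _ "open_loop (\<lambda>_. \<epsilon>) u"]) (simp add: open_loop_def)
qed (use assms in auto)

definition isolation_schedule :: "nat \<Rightarrow> nat \<Rightarrow> real \<Rightarrow> real \<Rightarrow> nat \<Rightarrow> nat \<Rightarrow> real" where
  "isolation_schedule K k \<rho> a t i =
     (if t < K then a else if t = K then -\<rho> else if i = k then -a else a)"

lemma isolation_schedule_reaches_E1:
  assumes "2 \<le> n" "in_cube n x0" "k \<in> {1..n}" "\<forall>i\<in>{1..n}. 0 \<le> r i" "r k < 1"
    and "0 \<le> \<epsilon>" "r k / 2 + 3 * \<epsilon> < \<eta>" "\<forall>j\<in>{1..n}. r j / real n \<le> \<eta> - 2 * \<epsilon>"
    and "1 \<le> real K * (\<eta> - 2 * \<epsilon>)"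
    and b: "\<forall>t<2 * K + 2. \<forall>i\<in>{1..n}. \<bar>b t i\<bar> \<le> \<epsilon>"
  shows "state n r (open_loop (\<lambda>_. \<epsilon>) (isolation_schedule K k (r k / 2) (\<eta> - \<epsilon>))) b x0 (2 * K + 2)
    \<in> E1 n"
proof -
  let ?u = "isolation_schedule K k (r k / 2) (\<eta> - \<epsilon>)"
  interpret hk_trajectory n r "state n r (open_loop (\<lambda>_. \<epsilon>) ?u) b x0" "\<lambda>t i. ?u t i + b t i"
    using hk_trajectory_open_loop assms(4) .
  have b_le: "-\<epsilon> \<le> b t i \<and> b t i \<le> \<epsilon>" if "t < 2 * K + 2" "i \<in> {1..n}" for t i
  proof -
    have "\<bar>b t i\<bar> \<le> \<epsilon>" using b that by blast
    then show ?thesis by (auto simp: abs_le_iff)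
  qed
  show ?thesis
  proof (rule isolation_reaches_E1[where \<gamma> = "\<eta> - 2 * \<epsilon>" and \<rho> = "r k / 2" and \<epsilon> = \<epsilon>])
    show "\<forall>t<K. \<forall>i\<in>{1..n}. \<eta> - 2 * \<epsilon> \<le> ?u t i + b t i"
    proof (intro allI impI ballI)
      fix t i assume "t < K" "i \<in> {1..n}"
      then show "\<eta> - 2 * \<epsilon> \<le> ?u t i + b t i"
        using b_le[of t i] by (simp add: isolation_schedule_def)
    qed
    show "\<forall>i\<in>{1..n}. \<bar>?u K i + b K i + r k / 2\<bar> \<le> \<epsilon>"
      using b by (simp add: isolation_schedule_def)
    show "\<forall>s\<le>K. ?u (Suc K + s) k + b (Suc K + s) k \<le> -(\<eta> - 2 * \<epsilon>)"
    proof (intro allI impI)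
      fix s assume "s \<le> K"
      then show "?u (Suc K + s) k + b (Suc K + s) k \<le> -(\<eta> - 2 * \<epsilon>)"
        using b_le[of "Suc K + s" k] assms(3) by (simp add: isolation_schedule_def)
    qed
    show "\<forall>s\<le>K. \<forall>j\<in>{1..n}-{k}. \<eta> - 2 * \<epsilon> \<le> ?u (Suc K + s) j + b (Suc K + s) j"
    proof (intro allI impI ballI)
      fix s j assume "s \<le> K" "j \<in> {1..n}-{k}"
      then show "\<eta> - 2 * \<epsilon> \<le> ?u (Suc K + s) j + b (Suc K + s) j"
        using b_le[of "Suc K + s" j] by (simp add: isolation_schedule_def)
    qed
  qed (use assms in \<open>auto simp: state_0\<close>)
qed

lemma robustly_reachable_E1_by_isolation:
  assumes "2 \<le> n" "k \<in> {1..n}" "\<forall>i\<in>{1..n}. 0 \<le> r i" "r k < 1"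
    and \<epsilon>: "0 < \<epsilon>" "r k / 2 + 3 * \<epsilon> < \<eta>" "\<forall>j\<in>{1..n}. r j / real n \<le> \<eta> - 2 * \<epsilon>"
  shows "robustly_reachable n r \<eta> (E1 n)"
proof -
  define K where "K = nat \<lceil>1 / (\<eta> - 2 * \<epsilon>)\<rceil>"
  have K: "1 \<le> real K * (\<eta> - 2 * \<epsilon>)"
    using one_le_ceiling_inverse_mult[of "\<eta> - 2 * \<epsilon>"] \<epsilon>(1,2) assms(2,3) unfolding K_def by force
  let ?u = "isolation_schedule K k (r k / 2) (\<eta> - \<epsilon>)"
  show ?thesis
  proof (rule robustly_reachable_open_loop[where T = "2 * K + 2" and \<epsilon> = \<epsilon> and u = ?u])
    show "0 < 2 * K + 2" "0 < \<epsilon>" "\<epsilon> < \<eta>"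
      using \<epsilon> assms(2,3) by force+
    show "\<bar>?u t i\<bar> \<le> \<eta> - \<epsilon>" for t i
      using \<epsilon> assms(2,3) by (force simp: isolation_schedule_def)
  next
    fix x0 b assume "in_cube n x0" "\<forall>t<2 * K + 2. \<forall>i\<in>{1..n}. \<bar>b t i\<bar> \<le> \<epsilon>"
    then show "\<exists>t\<in>{1..2 * K + 2}. state n r (open_loop (\<lambda>_. \<epsilon>) ?u) b x0 t \<in> E1 n"
      using isolation_schedule_reaches_E1[of n x0 k r \<epsilon> \<eta> K b] K \<epsilon> assms
      by (intro bexI[of _ "2 * K + 2"]) auto
  qed
qed

lemma isolation_margin:
  fixes \<rho> M \<eta> :: real
  assumes "\<rho> < \<eta>" "M < \<eta>"
  obtains \<epsilon> where "0 < \<epsilon>" "\<rho> + 3 * \<epsilon> < \<eta>" "M \<le> \<eta> - 2 * \<epsilon>"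
proof
  show "0 < min (\<eta> - \<rho>) (\<eta> - M) / 4"
    and "\<rho> + 3 * (min (\<eta> - \<rho>) (\<eta> - M) / 4) < \<eta>"
    and "M \<le> \<eta> - 2 * (min (\<eta> - \<rho>) (\<eta> - M) / 4)"
    using assms by (auto simp: min_def field_simps)
qed

theorem lemma3:
  fixes n :: nat and r :: "nat \<Rightarrow> real" and \<eta> :: real
  assumes "n \<ge> 3"
    and "\<forall>i\<in>{1..n}. 0 < r i \<and> r i \<le> 1"
    and "\<eta> > 0"
    and "Min (r ` {1..n}) < 1"
    and "\<eta> > max (Min (r ` {1..n}) / 2) (Max (r ` {1..n}) / real n)"
  shows "robustly_reachable n r \<eta> (E1 n)"
proof -
  obtain k where k: "k \<in> {1..n}" "r k = Min (r ` {1..n})"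
    using Min_in[of "r ` {1..n}"] assms(1) by fastforce
  obtain \<epsilon> where \<epsilon>: "0 < \<epsilon>" "r k / 2 + 3 * \<epsilon> < \<eta>"
    "Max (r ` {1..n}) / real n \<le> \<eta> - 2 * \<epsilon>"
    using isolation_margin[of "r k / 2" \<eta> "Max (r ` {1..n}) / real n"] assms(5) k(2) by auto
  have "\<forall>j\<in>{1..n}. r j / real n \<le> Max (r ` {1..n}) / real n"
    by (simp add: divide_right_mono)
  with \<epsilon>(3) have "\<forall>j\<in>{1..n}. r j / real n \<le> \<eta> - 2 * \<epsilon>"
    by force
  moreover have "\<forall>i\<in>{1..n}. 0 \<le> r i"
    using assms(2) by (simp add: less_imp_le)
  ultimately show ?thesis
    using robustly_reachable_E1_by_isolation[OF _ k(1)] \<epsilon>(1,2) assms(1,4) k(2) by simp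
qed

end
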